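(* Let $c\ge 1$. If there exists a $c$-competitive online algorithm for line chasing in $\mathbb{R}^2$, then there exists a $c$-competitive rts-oblivious online algorithm for line chasing in $\mathbb{R}^2$.
   Context: Line chasing in $\mathbb{R}^2$: given an initial point $P_0$ and lines $X_1,\dots,X_m$ revealed one at a time, an online algorithm chooses $P_t\in X_t$ knowing only $P_0,X_1,\dots,X_t$. Formally an algorithm is a function $\mathcal{A}$ with $\mathcal{A}(P_0)=P_0$ and $\mathcal{A}(P_0,X_1,\dots,X_t)\in X_t$ for all $P_0$ and lines $X_1,\dots,X_t$; its cost on $P_0,X_1,\dots,X_m$ is $\sum_{t=1}^m|\mathcal{A}(P_0,X_1,\dots,X_{t-1})\,\mathcal{A}(P_0,X_1,\dots,X_t)|$ (Euclidean distances). It is $c$-competitive if on every input its cost is at most $c$ times $\min\{\sum_t|A_{t-1}A_t|: A_0=P_0, A_t\in X_t\}$. A direct similarity of $\mathbb{R}^2$ is a bijection $f$ that is a composition of a rotation, a translation and a scaling by some factor $r_f>0$. $\mathcal{A}$ is rts-oblivious if $\mathcal{A}(f(P_0),f(X_1),\dots,f(X_t))=f(\mathcal{A}(P_0,X_1,\dots,X_t))$ for every $P_0$, all lines $X_i$, and every direct similarity $f$. *)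

theory Defs
  imports "HOL-Analysis.Analysis"
begin

text \<open>The plane R^2 is modelled as the complex numbers (Euclidean distance = dist).\<close>

definition is_line :: "complex set \<Rightarrow> bool" where
  "is_line L \<longleftrightarrow> (\<exists>p d. d \<noteq> 0 \<and> L = {p + complex_of_real t * d | t. True})"

text \<open>An online algorithm: maps the initial point and the list of lines revealed so far
  to the current position.\<close>
type_synonym alg = "complex \<Rightarrow> complex set list \<Rightarrow> complex"

definition is_online_alg :: "alg \<Rightarrow> bool" where
  "is_online_alg A \<longleftrightarrow>
     (\<forall>P0. A P0 [] = P0) \<and>
     (\<forall>P0 Xs. Xs \<noteq> [] \<and> (\<forall>X\<in>set Xs. is_line X) \<longrightarrow> A P0 Xs \<in> last Xs)"

definition alg_cost :: "alg \<Rightarrow> complex \<Rightarrow> complex set list \<Rightarrow> real" where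
  "alg_cost A P0 Xs = (\<Sum>t=1..length Xs. dist (A P0 (take (t - 1) Xs)) (A P0 (take t Xs)))"

definition opt_cost :: "complex \<Rightarrow> complex set list \<Rightarrow> real" where
  "opt_cost P0 Xs = Inf {(\<Sum>t=1..length Xs. dist (a (t - 1)) (a t)) | a.
       a 0 = P0 \<and> (\<forall>t\<in>{1..length Xs}. a t \<in> Xs ! (t - 1))}"

definition competitive :: "real \<Rightarrow> alg \<Rightarrow> bool" where
  "competitive c A \<longleftrightarrow>
     (\<forall>P0 Xs. (\<forall>X\<in>set Xs. is_line X) \<longrightarrow> alg_cost A P0 Xs \<le> c * opt_cost P0 Xs)"

definition direct_similarity :: "(complex \<Rightarrow> complex) \<Rightarrow> bool" where
  "direct_similarity f \<longleftrightarrow>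
     (\<exists>\<theta> r b. r > 0 \<and> f = (\<lambda>z. complex_of_real r * (cis \<theta> * z) + b))"

definition rts_oblivious :: "alg \<Rightarrow> bool" where
  "rts_oblivious A \<longleftrightarrow>
     (\<forall>f P0 Xs. direct_similarity f \<and> (\<forall>X\<in>set Xs. is_line X) \<longrightarrow>
        A (f P0) (map (\<lambda>X. f ` X) Xs) = f (A P0 Xs))"

end

theory Submission
  imports Defs
begin

(*
  While the revealed lines pass through P0, stay at P0: this is free.  At the first line Y
  missing P0, pass to the complex coordinate w = (z - P0) / (Q - P0), where Q is the foot of
  the perpendicular from P0 to Y, and run the given algorithm from 0 on this and all later
  lines.  The coordinate is determined by P0 and Y alone and every direct similarity maps
  feet of perpendiculars to feet of perpendiculars, so the new algorithm commutes with
  direct similarities.  Changing coordinates scales all costs by the same factor |Q - P0|,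
  and the requests skipped at the start can only raise the offline optimum, so
  c-competitiveness is preserved.
*)

lemma is_line_iff_range:
  "is_line L \<longleftrightarrow> (\<exists>p d. d \<noteq> 0 \<and> L = range (\<lambda>t. p + complex_of_real t * d))"
  by (simp add: is_line_def full_SetCompr_eq)

lemma affine_line: "is_line L \<Longrightarrow> affine L"
  unfolding is_line_iff_range affine_def
proof (elim exE conjE, intro ballI allI impI)
  fix p d x y :: complex and u v :: real
  assume L: "L = range (\<lambda>t. p + complex_of_real t * d)" and "x \<in> L" "y \<in> L" "u + v = 1"
  then obtain s t where "x = p + complex_of_real s * d" "y = p + complex_of_real t * d" by blast
  then have "u *\<^sub>R x + v *\<^sub>R y = complex_of_real (u + v) * p + complex_of_real (u * s + v * t) * d"
    by (simp add: scaleR_conv_of_real algebra_simps)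
  with \<open>u + v = 1\<close> have "u *\<^sub>R x + v *\<^sub>R y = p + complex_of_real (u * s + v * t) * d"
    by simp
  then show "u *\<^sub>R x + v *\<^sub>R y \<in> L"
    unfolding L by blast
qed

lemma line_nonempty: "is_line L \<Longrightarrow> L \<noteq> {}"
  unfolding is_line_def by blast

lemma is_line_affine_image:
  assumes "is_line L" "a \<noteq> 0"
  shows "is_line ((\<lambda>z. a * z + b) ` L)"
proof -
  obtain p d where "d \<noteq> 0" and L: "L = range (\<lambda>t. p + complex_of_real t * d)"
    using assms(1) unfolding is_line_iff_range by blast
  have "(\<lambda>z. a * z + b) ` L = range (\<lambda>t. (a * p + b) + complex_of_real t * (a * d))"
    unfolding L image_image by (simp add: algebra_simps)
  moreover have "a * d \<noteq> 0"
    using \<open>d \<noteq> 0\<close> \<open>a \<noteq> 0\<close> by simp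
  ultimately show ?thesis unfolding is_line_iff_range by blast
qed

lemma closest_point_affine_image:
  fixes S :: "complex set"
  assumes "closed S" "convex S" "S \<noteq> {}" "a \<noteq> 0"
  shows "closest_point ((\<lambda>z. a * z + b) ` S) (a * P + b) = a * closest_point S P + b"
proof -
  let ?g = "\<lambda>z. a * z + b"
  have g: "?g ` S = (+) b ` ((*) a ` S)"
    by (simp add: image_image add.commute)
  have "inj ((*) a)"
    using \<open>a \<noteq> 0\<close> by (auto intro: injI)
  then have "closed (?g ` S)"
    unfolding g by (intro closed_translation closed_injective_linear_image assms(1) linear_times)
  moreover have "convex (?g ` S)"
    unfolding g by (intro convex_translation convex_linear_image assms(2) linear_times)
  moreover have "?g (closest_point S P) \<in> ?g ` S"
    using closest_point_in_set[OF assms(1,3)] by blast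
  moreover have "dist (?g P) (?g (closest_point S P)) \<le> dist (?g P) w" if "w \<in> ?g ` S" for w
    using that closest_point_le[OF assms(1)]
    by (auto simp: dist_norm norm_mult mult_left_mono simp flip: right_diff_distrib)
  ultimately show ?thesis by (metis closest_point_unique)
qed

lemma closest_point_line_affine_image:
  assumes "is_line Y" "a \<noteq> 0"
  shows "closest_point ((\<lambda>z. a * z + b) ` Y) (a * P + b) = a * closest_point Y P + b"
  using assms affine_line[OF assms(1)]
  by (intro closest_point_affine_image) (simp_all add: affine_closed affine_imp_convex line_nonempty)

lemma closest_point_line_ne: "is_line Y \<Longrightarrow> P \<notin> Y \<Longrightarrow> closest_point Y P \<noteq> P"
  using closest_point_in_set[OF affine_closed[OF affine_line] line_nonempty] by metis

lemma direct_similarityE: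
  assumes "direct_similarity f"
  obtains a b where "a \<noteq> 0" "f = (\<lambda>z. a * z + b)"
proof -
  from assms obtain \<theta> r b where "r > 0" "f = (\<lambda>z. complex_of_real r * (cis \<theta> * z) + b)"
    unfolding direct_similarity_def by blast
  then have "complex_of_real r * cis \<theta> \<noteq> 0" "f = (\<lambda>z. complex_of_real r * cis \<theta> * z + b)"
    by (simp_all add: mult.assoc)
  then show ?thesis using that by blast
qed

definition path_cost :: "(nat \<Rightarrow> 'a::metric_space) \<Rightarrow> nat \<Rightarrow> real" where
  "path_cost a n = (\<Sum>t=1..n. dist (a (t - 1)) (a t))"

lemma path_cost_0 [simp]: "path_cost a 0 = 0"
  by (simp add: path_cost_def)

lemma path_cost_Suc [simp]: "path_cost a (Suc n) = path_cost a n + dist (a n) (a (Suc n))"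
  by (simp add: path_cost_def)

lemma path_cost_nonneg: "0 \<le> path_cost a n"
  by (induction n) simp_all

lemma path_cost_comp_le:
  assumes "\<And>x y. dist (g x) (g y) \<le> L * dist x y"
  shows "path_cost (\<lambda>t. g (a t)) n \<le> L * path_cost a n"
  by (induction n) (simp_all add: distrib_left add_mono assms)

lemma path_cost_delay: "path_cost (\<lambda>t. a (t - k)) (k + n) = path_cost a n"
proof (induction n)
  case 0
  have "path_cost (\<lambda>t. a (t - k)) m = 0" if "m \<le> k" for m
    using that by (induction m) simp_all
  then show ?case by simp
next
  case (Suc n)
  then show ?case by simp
qed

lemma path_cost_skip_first:
  "path_cost (\<lambda>s. if s = 0 then a 0 else a (Suc s)) n \<le> path_cost a (Suc n)"
proof (induction n)
  case 0
  then show ?case by simp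
next
  case (Suc n)
  show ?case
  proof (cases n)
    case 0
    then show ?thesis using dist_triangle[of "a 0" "a 2" "a 1"] by (simp add: numeral_2_eq_2)
  next
    case (Suc m)
    with Suc.IH show ?thesis by simp
  qed
qed

lemma alg_cost_eq_path_cost: "alg_cost A P0 Xs = path_cost (\<lambda>t. A P0 (take t Xs)) (length Xs)"
  by (simp add: alg_cost_def path_cost_def)

definition feasible_chase :: "complex \<Rightarrow> complex set list \<Rightarrow> (nat \<Rightarrow> complex) \<Rightarrow> bool" where
  "feasible_chase P0 Xs a \<longleftrightarrow> a 0 = P0 \<and> (\<forall>t\<in>{1..length Xs}. a t \<in> Xs ! (t - 1))"

lemma opt_cost_eq_Inf: "opt_cost P0 Xs = Inf {path_cost a (length Xs) | a. feasible_chase P0 Xs a}"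
  by (simp add: opt_cost_def path_cost_def feasible_chase_def)

lemma opt_cost_le: "feasible_chase P0 Xs a \<Longrightarrow> opt_cost P0 Xs \<le> path_cost a (length Xs)"
  unfolding opt_cost_eq_Inf by (rule cInf_lower) (auto intro: bdd_belowI[of _ 0] path_cost_nonneg)

lemma feasible_chase_exists:
  assumes "\<forall>X\<in>set Xs. X \<noteq> {}"
  shows "\<exists>a. feasible_chase P0 Xs a"
proof -
  have "Xs ! (t - 1) \<noteq> {}" if "t \<in> {1..length Xs}" for t
    using that assms by auto
  then have "feasible_chase P0 Xs (\<lambda>t. if t = 0 then P0 else SOME x. x \<in> Xs ! (t - 1))"
    unfolding feasible_chase_def by (auto simp: some_in_eq)
  then show ?thesis by blast
qed

lemma opt_cost_greatest:
  assumes "\<forall>X\<in>set Xs. X \<noteq> {}"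
    and "\<And>a. feasible_chase P0 Xs a \<Longrightarrow> v \<le> path_cost a (length Xs)"
  shows "v \<le> opt_cost P0 Xs"
  unfolding opt_cost_eq_Inf using feasible_chase_exists[OF assms(1)] assms(2)
  by (intro cInf_greatest) blast+

lemma opt_cost_nonneg: "\<forall>X\<in>set Xs. X \<noteq> {} \<Longrightarrow> 0 \<le> opt_cost P0 Xs"
  by (rule opt_cost_greatest) (simp_all add: path_cost_nonneg)

lemma opt_cost_Cons_le:
  assumes "\<forall>X\<in>set (T # Xs). X \<noteq> {}"
  shows "opt_cost P0 Xs \<le> opt_cost P0 (T # Xs)"
proof (rule opt_cost_greatest[OF assms])
  fix a assume a: "feasible_chase P0 (T # Xs) a"
  define a' where "a' s = (if s = 0 then a 0 else a (Suc s))" for s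
  have "feasible_chase P0 Xs a'"
    using a unfolding feasible_chase_def a'_def by (auto dest: bspec[of _ _ "Suc _"])
  then have "opt_cost P0 Xs \<le> path_cost a' (length Xs)"
    by (rule opt_cost_le)
  also have "\<dots> \<le> path_cost a (length (T # Xs))"
    unfolding a'_def using path_cost_skip_first[of a "length Xs"] by simp
  finally show "opt_cost P0 Xs \<le> path_cost a (length (T # Xs))" .
qed

lemma opt_cost_append_le:
  "\<forall>X\<in>set (Ts @ Xs). X \<noteq> {} \<Longrightarrow> opt_cost P0 Xs \<le> opt_cost P0 (Ts @ Xs)"
proof (induction Ts)
  case (Cons T Ts)
  then have "opt_cost P0 Xs \<le> opt_cost P0 (Ts @ Xs)"
    by simp
  also have "\<dots> \<le> opt_cost P0 (T # Ts @ Xs)"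
    using Cons.prems by (intro opt_cost_Cons_le) simp
  finally show ?case by simp
qed simp

lemma opt_cost_image_le:
  assumes "L > 0" "\<And>x y. dist (g x) (g y) \<le> L * dist x y" "\<forall>X\<in>set Xs. X \<noteq> {}"
  shows "opt_cost (g P0) (map ((`) g) Xs) \<le> L * opt_cost P0 Xs"
proof -
  have "opt_cost (g P0) (map ((`) g) Xs) / L \<le> opt_cost P0 Xs"
  proof (rule opt_cost_greatest[OF assms(3)])
    fix a assume "feasible_chase P0 Xs a"
    then have "feasible_chase (g P0) (map ((`) g) Xs) (\<lambda>t. g (a t))"
      by (auto simp: feasible_chase_def)
    then have "opt_cost (g P0) (map ((`) g) Xs) \<le> path_cost (\<lambda>t. g (a t)) (length Xs)"
      using opt_cost_le by fastforce
    also have "\<dots> \<le> L * path_cost a (length Xs)"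
      by (rule path_cost_comp_le[OF assms(2)])
    finally show "opt_cost (g P0) (map ((`) g) Xs) / L \<le> path_cost a (length Xs)"
      using \<open>L > 0\<close> by (simp add: pos_divide_le_eq mult.commute)
  qed
  then show ?thesis
    using \<open>L > 0\<close> by (simp add: pos_divide_le_eq mult.commute)
qed

(* Coordinates in which P is 0 and the foot of the perpendicular from P to Y is 1;
   degenerate (everything goes to 0) when P lies on Y. *)
definition frame :: "complex \<Rightarrow> complex set \<Rightarrow> complex \<Rightarrow> complex" where
  "frame P Y z = (z - P) / (closest_point Y P - P)"

definition unframe :: "complex \<Rightarrow> complex set \<Rightarrow> complex \<Rightarrow> complex" where
  "unframe P Y w = P + w * (closest_point Y P - P)"

lemma frame_eq_affine:
  "frame P Y = (\<lambda>z. inverse (closest_point Y P - P) * z + - P / (closest_point Y P - P))"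
  by (simp add: frame_def fun_eq_iff divide_inverse algebra_simps)

lemma unframe_frame: "closest_point Y P \<noteq> P \<Longrightarrow> unframe P Y (frame P Y z) = z"
  by (simp add: frame_def unframe_def)

lemma frame_self [simp]: "frame P Y P = 0"
  by (simp add: frame_def)

lemma unframe_0 [simp]: "unframe P Y 0 = P"
  by (simp add: unframe_def)

lemma dist_frame: "dist (frame P Y x) (frame P Y y) = inverse (cmod (closest_point Y P - P)) * dist x y"
proof -
  have "frame P Y x - frame P Y y = (x - y) / (closest_point Y P - P)"
    by (simp add: frame_def diff_divide_distrib)
  then show ?thesis
    by (simp add: dist_norm norm_divide divide_inverse_commute norm_mult norm_inverse)
qed

lemma dist_unframe: "dist (unframe P Y x) (unframe P Y y) = cmod (closest_point Y P - P) * dist x y"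
  by (simp add: unframe_def dist_norm norm_mult flip: left_diff_distrib)

lemma is_line_frame_image:
  "is_line X \<Longrightarrow> closest_point Y P \<noteq> P \<Longrightarrow> is_line (frame P Y ` X)"
  unfolding frame_eq_affine by (rule is_line_affine_image) simp_all

lemma frame_affine_image:
  assumes "is_line Y" "a \<noteq> 0"
  shows "frame (a * P + b) ((\<lambda>z. a * z + b) ` Y) (a * z + b) = frame P Y z"
  using assms(2) unfolding frame_def closest_point_line_affine_image[OF assms]
  by (simp flip: right_diff_distrib)

lemma unframe_affine_image:
  assumes "is_line Y" "a \<noteq> 0"
  shows "unframe (a * P + b) ((\<lambda>z. a * z + b) ` Y) w = a * unframe P Y w + b"
  unfolding unframe_def closest_point_line_affine_image[OF assms] by (simp add: algebra_simps)

definition rts_alg :: "alg \<Rightarrow> alg" where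
  "rts_alg A P0 Xs = (case dropWhile (\<lambda>X. P0 \<in> X) Xs of
      [] \<Rightarrow> P0
    | Y # Ws \<Rightarrow> unframe P0 Y (A 0 (map ((`) (frame P0 Y)) (Y # Ws))))"

lemma first_line_missing_cases:
  obtains "\<forall>X\<in>set Xs. P0 \<in> X"
    | Ts Y Ws where "Xs = Ts @ Y # Ws" "\<forall>T\<in>set Ts. P0 \<in> T" "P0 \<notin> Y"
proof (cases "\<exists>X\<in>set Xs. P0 \<notin> X")
  case True
  then show ?thesis
    by (rule split_list_first_propE) (auto intro: that(2))
qed (use that(1) in blast)

lemma rts_alg_stay:
  assumes "\<forall>X\<in>set Xs. P0 \<in> X"
  shows "rts_alg A P0 Xs = P0"
proof -
  have "dropWhile (\<lambda>X. P0 \<in> X) Xs = []"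
    using assms by simp
  then show ?thesis by (simp only: rts_alg_def list.case)
qed

lemma rts_alg_append:
  assumes "\<forall>T\<in>set Ts. P0 \<in> T" "P0 \<notin> Y"
  shows "rts_alg A P0 (Ts @ Y # Ws) = unframe P0 Y (A 0 (map ((`) (frame P0 Y)) (Y # Ws)))"
  using assms by (simp add: rts_alg_def)

lemma rts_alg_take:
  assumes "A 0 [] = 0" "\<forall>T\<in>set Ts. P0 \<in> T" "P0 \<notin> Y"
  shows "rts_alg A P0 (take t (Ts @ Y # Ws)) =
    unframe P0 Y (A 0 (take (t - length Ts) (map ((`) (frame P0 Y)) (Y # Ws))))"
proof (cases "t \<le> length Ts")
  case True
  have "\<forall>X\<in>set (take t Ts). P0 \<in> X"
    using assms(2) by (auto dest: in_set_takeD)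
  with True show ?thesis
    using assms(1) rts_alg_stay[of "take t Ts"] by simp
next
  case False
  then obtain j where j: "t - length Ts = Suc j"
    by (metis Suc_diff_Suc not_le)
  then have "take t (Ts @ Y # Ws) = Ts @ Y # take j Ws"
    by (simp add: take_append)
  moreover have "take (t - length Ts) (map ((`) (frame P0 Y)) (Y # Ws)) =
      map ((`) (frame P0 Y)) (Y # take j Ws)"
    unfolding j by (simp add: take_map)
  ultimately show ?thesis
    using rts_alg_append[OF assms(2,3)] by (simp only:)
qed

lemma is_online_alg_rts_alg:
  assumes "is_online_alg A"
  shows "is_online_alg (rts_alg A)"
  unfolding is_online_alg_def
proof (intro conjI allI impI)
  fix P0 show "rts_alg A P0 [] = P0"
    by (simp add: rts_alg_def)
next
  have online: "A P Zs \<in> last Zs" if "Zs \<noteq> []" "\<forall>Z\<in>set Zs. is_line Z" for P Zs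
    using assms that unfolding is_online_alg_def by blast
  fix P0 Xs assume Xs: "Xs \<noteq> [] \<and> (\<forall>X\<in>set Xs. is_line X)"
  show "rts_alg A P0 Xs \<in> last Xs"
  proof (cases rule: first_line_missing_cases[of Xs P0])
    case 1
    with Xs show ?thesis by (simp add: rts_alg_stay)
  next
    case (2 Ts Y Ws)
    let ?Zs = "map ((`) (frame P0 Y)) (Y # Ws)"
    have cp: "closest_point Y P0 \<noteq> P0"
      using 2 Xs closest_point_line_ne by simp
    have "\<forall>Z\<in>set ?Zs. is_line Z"
      using 2 Xs is_line_frame_image[OF _ cp] by auto
    then have "A 0 ?Zs \<in> last ?Zs"
      by (intro online) simp_all
    also have "last ?Zs = frame P0 Y ` last Xs"
      using 2(1) by (simp add: last_map)
    finally obtain y where "y \<in> last Xs" "A 0 ?Zs = frame P0 Y y"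
      by (rule imageE)
    then show ?thesis
      using 2 rts_alg_append unframe_frame[OF cp] by simp
  qed
qed

lemma rts_alg_affine_image:
  assumes "a \<noteq> 0" "\<forall>X\<in>set Xs. is_line X"
  shows "rts_alg A (a * P0 + b) (map ((`) (\<lambda>z. a * z + b)) Xs) = a * rts_alg A P0 Xs + b"
proof (cases rule: first_line_missing_cases[of Xs P0])
  case 1
  then have "\<forall>X\<in>set (map ((`) (\<lambda>z. a * z + b)) Xs). a * P0 + b \<in> X"
    by auto
  then show ?thesis
    using rts_alg_stay[OF 1] by (simp add: rts_alg_stay)
next
  case (2 Ts Y Ws)
  let ?g = "\<lambda>z. a * z + b"
  have "inj ?g"
    using assms(1) by (auto intro: injI)
  have Y: "is_line Y"
    using 2 assms(2) by simp
  have "map ((`) (frame (?g P0) (?g ` Y))) (map ((`) ?g) (Y # Ws)) = map ((`) (frame P0 Y)) (Y # Ws)"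
    by (simp add: image_image frame_affine_image[OF Y assms(1)])
  moreover have "\<forall>T\<in>set (map ((`) ?g) Ts). ?g P0 \<in> T" "?g P0 \<notin> ?g ` Y"
    using 2 inj_image_mem_iff[OF \<open>inj ?g\<close>] by auto
  ultimately show ?thesis
    using 2 rts_alg_append unframe_affine_image[OF Y assms(1)] by (simp del: map_map)
qed

lemma rts_oblivious_rts_alg: "rts_oblivious (rts_alg A)"
  unfolding rts_oblivious_def
proof (intro allI impI)
  fix f P0 Xs assume "direct_similarity f \<and> (\<forall>X\<in>set Xs. is_line X)"
  then show "rts_alg A (f P0) (map ((`) f) Xs) = f (rts_alg A P0 Xs)"
    by (auto elim: direct_similarityE simp: rts_alg_affine_image)
qed

lemma alg_cost_rts_alg_le:
  assumes "A 0 [] = 0" "\<forall>T\<in>set Ts. P0 \<in> T" "P0 \<notin> Y"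
  shows "alg_cost (rts_alg A) P0 (Ts @ Y # Ws) \<le>
    cmod (closest_point Y P0 - P0) * alg_cost A 0 (map ((`) (frame P0 Y)) (Y # Ws))"
proof -
  define B where "B j = A 0 (take j (map ((`) (frame P0 Y)) (Y # Ws)))" for j
  have "alg_cost (rts_alg A) P0 (Ts @ Y # Ws) =
      path_cost (\<lambda>t. unframe P0 Y (B (t - length Ts))) (length Ts + length (Y # Ws))"
    unfolding alg_cost_eq_path_cost B_def using rts_alg_take[where A = A, OF assms] by simp
  also have "\<dots> \<le> cmod (closest_point Y P0 - P0) *
      path_cost (\<lambda>t. B (t - length Ts)) (length Ts + length (Y # Ws))"
    by (rule path_cost_comp_le) (simp add: dist_unframe)
  also have "path_cost (\<lambda>t. B (t - length Ts)) (length Ts + length (Y # Ws)) =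
      alg_cost A 0 (map ((`) (frame P0 Y)) (Y # Ws))"
    unfolding path_cost_delay by (simp add: alg_cost_eq_path_cost B_def[abs_def])
  finally show ?thesis .
qed

lemma opt_cost_frame_le:
  assumes "is_line Y" "P0 \<notin> Y" "\<forall>X\<in>set Xs. X \<noteq> {}"
  shows "cmod (closest_point Y P0 - P0) * opt_cost 0 (map ((`) (frame P0 Y)) Xs) \<le> opt_cost P0 Xs"
proof -
  have "cmod (closest_point Y P0 - P0) > 0"
    using closest_point_line_ne[OF assms(1,2)] by simp
  moreover have "opt_cost (frame P0 Y P0) (map ((`) (frame P0 Y)) Xs) \<le>
      inverse (cmod (closest_point Y P0 - P0)) * opt_cost P0 Xs"
    using calculation assms(3) by (intro opt_cost_image_le) (simp_all add: dist_frame)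
  ultimately show ?thesis
    by (simp add: field_simps)
qed

lemma competitive_rts_alg:
  assumes online: "is_online_alg A" and comp: "competitive c A" and "c \<ge> 0"
  shows "competitive c (rts_alg A)"
  unfolding competitive_def
proof (intro allI impI)
  fix P0 Xs assume lines: "\<forall>X\<in>set Xs. is_line X"
  then have nonempty: "\<forall>X\<in>set Xs. X \<noteq> {}"
    using line_nonempty by blast
  show "alg_cost (rts_alg A) P0 Xs \<le> c * opt_cost P0 Xs"
  proof (cases rule: first_line_missing_cases[of Xs P0])
    case 1
    then have "rts_alg A P0 (take t Xs) = P0" for t
      by (intro rts_alg_stay) (auto dest: in_set_takeD)
    then have "alg_cost (rts_alg A) P0 Xs = 0"
      by (simp add: alg_cost_def)
    then show ?thesis
      using opt_cost_nonneg[OF nonempty] \<open>c \<ge> 0\<close> by simp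
  next
    case (2 Ts Y Ws)
    define Zs where "Zs = map ((`) (frame P0 Y)) (Y # Ws)"
    define \<rho> where "\<rho> = cmod (closest_point Y P0 - P0)"
    have Y: "is_line Y"
      using 2 lines by simp
    have "A 0 [] = 0"
      using online by (simp add: is_online_alg_def)
    from this 2(2,3) have "alg_cost (rts_alg A) P0 Xs \<le> \<rho> * alg_cost A 0 Zs"
      unfolding 2(1) Zs_def \<rho>_def by (rule alg_cost_rts_alg_le)
    also have "\<dots> \<le> \<rho> * (c * opt_cost 0 Zs)"
    proof -
      have "closest_point Y P0 \<noteq> P0"
        using Y 2 by (simp add: closest_point_line_ne)
      then have "\<forall>Z\<in>set Zs. is_line Z"
        using 2 lines is_line_frame_image by (auto simp: Zs_def)
      then show ?thesis
        using comp unfolding competitive_def \<rho>_def by (simp add: mult_left_mono)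
    qed
    also have "\<dots> = c * (\<rho> * opt_cost 0 Zs)"
      by (simp add: ac_simps)
    also have "\<dots> \<le> c * opt_cost P0 (Y # Ws)"
    proof -
      have "\<rho> * opt_cost 0 Zs \<le> opt_cost P0 (Y # Ws)"
        unfolding Zs_def \<rho>_def using 2 nonempty by (intro opt_cost_frame_le[OF Y]) auto
      then show ?thesis
        using \<open>c \<ge> 0\<close> by (rule mult_left_mono)
    qed
    also have "\<dots> \<le> c * opt_cost P0 Xs"
      using 2 nonempty \<open>c \<ge> 0\<close> by (simp add: mult_left_mono opt_cost_append_le)
    finally show ?thesis .
  qed
qed

theorem mainTheorem3:
  fixes c :: real
  assumes "c \<ge> 1"
    and "\<exists>A. is_online_alg A \<and> competitive c A"
  shows "\<exists>A. is_online_alg A \<and> competitive c A \<and> rts_oblivious A"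
proof -
  obtain A where "is_online_alg A" "competitive c A"
    using assms(2) by blast
  moreover have "c \<ge> 0"
    using assms(1) by simp
  ultimately show ?thesis
    using is_online_alg_rts_alg competitive_rts_alg rts_oblivious_rts_alg by blast
qed

end
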